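(* Let $X$ be a block-independent process and suppose that $Z$ is admissible with respect to $Z^\star$. Then \[ I(X;Z(X))=I(X;Z^\star(X))=\lim_{n\to\infty}\frac{I(X_1^n;Z^\star(X_1^n))}{n}, \] and the limit on the right-hand side exists.
   Context: A process $X=(X_i)_{i\in\mathbb N}$ (with $X_m^n=(X_m,\dots,X_n)$) is block-independent with blocklength $b$ if for every $t\ge1$ and $n=tb$, $\Pr[X_1^n=x_1^n]=\prod_{i=1}^t\Pr[X_1^b=x_{(i-1)b+1}^{ib}]$. A channel $Z$ with finite input alphabet assigns to each finite input string $x$ a random output $Z(x)$ in a discrete set; applying a channel to several inputs means independent applications. $A\to B\to C$ denotes a Markov chain; logs base 2. Information rate $I(X;Z(X))=\liminf_n I(X_1^n;Z(X_1^n))/n$. $Z$ is admissible with respect to $Z^\star$ (same input alphabet) if: (1) there is $c>0$ with $H(Z^\star(X_1^n))\le cn$ for every process $X$ and $n\ge1$; (2) $I(X;Z(X))=I(X;Z^\star(X))$ for every process $X$; (3) for every $X$ and $1\le m\le n$: $X_1^n\to Z^\star(X_1^m),Z^\star(X_{m+1}^n)\to Z^\star(X_1^n)$; (4a) for every integer $\tau\ge1$ there is a non-decreasing $\gamma_m=o(m)$ with $\sum_m\gamma_m/m^2<\infty$ such that for every $X$ and $n\ge\tau$ there are $W_{\mathrm{pre}},W_{\mathrm{suf}}$ with $X_1^n\to Z^\star(X_1^n),W_{\mathrm{pre}}\to Z^\star(X_1^\tau),Z^\star(X_{\tau+1}^n)$, $X_1^n\to Z^\star(X_1^n),W_{\mathrm{suf}}\to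 Z^\star(X_1^{n-\tau}),Z^\star(X_{n-\tau+1}^n)$, $H(W_{\mathrm{pre}}),H(W_{\mathrm{suf}})\le\gamma_n$; (4b) there is $\alpha_m=o(m)$ such that for every $X$, $b$, $t$ there is $W$ with $X_1^{tb}\to Z^\star(X_1^{tb}),W\to Z^\star(X_1^b),\dots,Z^\star(X_{(t-1)b+1}^{tb})$ and $H(W)\le t\alpha_b$; (5) there is $\beta_m=o(m)$ such that for every $X$, $b$, $t$ there are $Y$ with $X_1^{tb}\to Z^\star(X_1^b),\dots,Z^\star(X_{(t-1)b+1}^{tb})\to Y$ and a deterministic $\phi$ with $Z^\star(X_1^{tb})=\phi(Z^\star(X_1^b),\dots,Z^\star(X_{(t-1)b+1}^{tb}),Y)$ and $\max_z\log|\phi^{-1}(z)|\le t\beta_b$. *)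

theory Defs
  imports "HOL-Probability.Probability" "HOL-Library.Landau_Symbols"
begin

text \<open>A process X = (X_i) is represented by its finite-dimensional laws:
  P n is the law of X_1^n (a string of length n); the family is consistent.\<close>

definition is_process :: "(nat \<Rightarrow> 'a list pmf) \<Rightarrow> bool" where
  "is_process P \<longleftrightarrow>
     (\<forall>n. \<forall>x\<in>set_pmf (P n). length x = n) \<and>
     (\<forall>m n. m \<le> n \<longrightarrow> map_pmf (take m) (P n) = P m)"

text \<open>i-th block (0-based) of length b, i.e. x_{ib+1}^{(i+1)b}.\<close>
definition blk :: "nat \<Rightarrow> nat \<Rightarrow> 'a list \<Rightarrow> 'a list" where
  "blk b i x = take b (drop (i * b) x)"

definition blocks :: "nat \<Rightarrow> nat \<Rightarrow> 'a list \<Rightarrow> 'a list list" where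
  "blocks b t x = map (\<lambda>i. blk b i x) [0..<t]"

definition block_independent :: "(nat \<Rightarrow> 'a list pmf) \<Rightarrow> nat \<Rightarrow> bool" where
  "block_independent P b \<longleftrightarrow>
     (\<forall>t\<ge>1. \<forall>x. length x = t * b \<longrightarrow>
        pmf (P (t * b)) x = (\<Prod>i<t. pmf (P b) (blk b i x)))"

definition block_indep_process :: "(nat \<Rightarrow> 'a list pmf) \<Rightarrow> bool" where
  "block_indep_process P \<longleftrightarrow> is_process P \<and> (\<exists>b\<ge>1. block_independent P b)"

fun indep_list :: "'c pmf list \<Rightarrow> 'c list pmf" where
  "indep_list [] = return_pmf []"
| "indep_list (p # ps) = bind_pmf p (\<lambda>z. map_pmf (Cons z) (indep_list ps))"

definition chan_joint :: "('a list \<Rightarrow> 'c pmf) \<Rightarrow> 'a list pmf \<Rightarrow> ('a list \<times> 'c) pmf" where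
  "chan_joint Z p = bind_pmf p (\<lambda>x. map_pmf (Pair x) (Z x))"

definition chan_joint2 ::
  "('a list \<Rightarrow> 'c pmf) \<Rightarrow> ('a list \<Rightarrow> 'a list) \<Rightarrow> ('a list \<Rightarrow> 'a list) \<Rightarrow> 'a list pmf
     \<Rightarrow> ('a list \<times> ('c \<times> 'c)) pmf" where
  "chan_joint2 Z f g p =
     bind_pmf p (\<lambda>x. bind_pmf (Z (f x)) (\<lambda>z1. map_pmf (\<lambda>z2. (x, (z1, z2))) (Z (g x))))"

definition chan_blocks ::
  "('a list \<Rightarrow> 'c pmf) \<Rightarrow> nat \<Rightarrow> nat \<Rightarrow> 'a list pmf \<Rightarrow> ('a list \<times> 'c list) pmf" where
  "chan_blocks Z b t p =
     bind_pmf p (\<lambda>x. map_pmf (Pair x) (indep_list (map Z (blocks b t x))))"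

definition ent :: "'x pmf \<Rightarrow> ereal" where
  "ent p = enn2ereal (\<integral>\<^sup>+ x. ennreal (- log 2 (pmf p x)) \<partial>measure_pmf p)"

definition minfo :: "('x \<times> 'y) pmf \<Rightarrow> real" where
  "minfo q = (\<integral> xy. log 2 (pmf q xy /
                 (pmf (map_pmf fst q) (fst xy) * pmf (map_pmf snd q) (snd xy))) \<partial>measure_pmf q)"

text \<open>Markov chain A -> B -> C for a joint law of (A, B, C).\<close>
definition markov :: "('x \<times> 'y \<times> 'z) pmf \<Rightarrow> bool" where
  "markov q \<longleftrightarrow> (\<forall>a b c.
     pmf q (a, b, c) * pmf (map_pmf (\<lambda>(a, b, c). b) q) b =
     pmf (map_pmf (\<lambda>(a, b, c). (a, b)) q) (a, b) * pmf (map_pmf snd q) (b, c))"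

definition info_n :: "(nat \<Rightarrow> 'a list pmf) \<Rightarrow> ('a list \<Rightarrow> 'c pmf) \<Rightarrow> nat \<Rightarrow> real" where
  "info_n P Z n = minfo (chan_joint Z (P n))"

definition info_rate :: "(nat \<Rightarrow> 'a list pmf) \<Rightarrow> ('a list \<Rightarrow> 'c pmf) \<Rightarrow> ereal" where
  "info_rate P Z = liminf (\<lambda>n. ereal (info_n P Z n / real n))"

definition admissible :: "('a::finite list \<Rightarrow> 'b pmf) \<Rightarrow> ('a list \<Rightarrow> 'c pmf) \<Rightarrow> bool" where
  "admissible Z Zs \<longleftrightarrow>
   \<comment> \<open>(1)\<close>
   (\<exists>c>0. \<forall>P. is_process P \<longrightarrow> (\<forall>n\<ge>1. ent (bind_pmf (P n) Zs) \<le> ereal (c * real n))) \<and>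
   \<comment> \<open>(2)\<close>
   (\<forall>P. is_process P \<longrightarrow> info_rate P Z = info_rate P Zs) \<and>
   \<comment> \<open>(3)\<close>
   (\<forall>P m n. is_process P \<longrightarrow> 1 \<le> m \<longrightarrow> m \<le> n \<longrightarrow>
      (\<exists>q :: ('a list \<times> ('c \<times> 'c) \<times> 'c) pmf.
         map_pmf (\<lambda>(x, zz, z). (x, zz)) q = chan_joint2 Zs (take m) (drop m) (P n) \<and>
         map_pmf (\<lambda>(x, zz, z). (x, z)) q = chan_joint Zs (P n) \<and>
         markov q)) \<and>
   \<comment> \<open>(4a)\<close>
   (\<forall>\<tau>::nat. \<tau> \<ge> 1 \<longrightarrow> (\<exists>\<gamma> :: nat \<Rightarrow> real.
      mono \<gamma> \<and> \<gamma> \<in> o(\<lambda>m. real m) \<and> summable (\<lambda>m. \<gamma> m / (real m)^2) \<and>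
      (\<forall>P n. is_process P \<longrightarrow> n \<ge> \<tau> \<longrightarrow>
        (\<exists>q :: ('a list \<times> ('c \<times> nat) \<times> ('c \<times> 'c)) pmf.
           map_pmf (\<lambda>(x, (z, w), zz). (x, zz)) q = chan_joint2 Zs (take \<tau>) (drop \<tau>) (P n) \<and>
           map_pmf (\<lambda>(x, (z, w), zz). (x, z)) q = chan_joint Zs (P n) \<and>
           markov q \<and>
           ent (map_pmf (\<lambda>(x, (z, w), zz). w) q) \<le> ereal (\<gamma> n)) \<and>
        (\<exists>q :: ('a list \<times> ('c \<times> nat) \<times> ('c \<times> 'c)) pmf.
           map_pmf (\<lambda>(x, (z, w), zz). (x, zz)) q
             = chan_joint2 Zs (take (n - \<tau>)) (drop (n - \<tau>)) (P n) \<and>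
           map_pmf (\<lambda>(x, (z, w), zz). (x, z)) q = chan_joint Zs (P n) \<and>
           markov q \<and>
           ent (map_pmf (\<lambda>(x, (z, w), zz). w) q) \<le> ereal (\<gamma> n))))) \<and>
   \<comment> \<open>(4b)\<close>
   (\<exists>\<alpha> :: nat \<Rightarrow> real. \<alpha> \<in> o(\<lambda>m. real m) \<and>
      (\<forall>P b t. is_process P \<longrightarrow> b \<ge> 1 \<longrightarrow> t \<ge> 1 \<longrightarrow>
        (\<exists>q :: ('a list \<times> ('c \<times> nat) \<times> 'c list) pmf.
           map_pmf (\<lambda>(x, (z, w), zs). (x, zs)) q = chan_blocks Zs b t (P (t * b)) \<and>
           map_pmf (\<lambda>(x, (z, w), zs). (x, z)) q = chan_joint Zs (P (t * b)) \<and>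
           markov q \<and>
           ent (map_pmf (\<lambda>(x, (z, w), zs). w) q) \<le> ereal (real t * \<alpha> b)))) \<and>
   \<comment> \<open>(5)\<close>
   (\<exists>\<beta> :: nat \<Rightarrow> real. \<beta> \<in> o(\<lambda>m. real m) \<and>
      (\<forall>P b t. is_process P \<longrightarrow> b \<ge> 1 \<longrightarrow> t \<ge> 1 \<longrightarrow>
        (\<exists>(q :: ('a list \<times> 'c list \<times> nat) pmf) (\<phi> :: 'c list \<times> nat \<Rightarrow> 'c).
           map_pmf (\<lambda>(x, zs, y). (x, zs)) q = chan_blocks Zs b t (P (t * b)) \<and>
           map_pmf (\<lambda>(x, zs, y). (x, \<phi> (zs, y))) q = chan_joint Zs (P (t * b)) \<and>
           markov q \<and>
           (\<forall>z. finite {v \<in> set_pmf (map_pmf snd q). \<phi> v = z} \<and>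
                real (card {v \<in> set_pmf (map_pmf snd q). \<phi> v = z}) \<le> 2 powr (real t * \<beta> b)))))"

end

theory Submission
  imports Defs
begin

(*
  Write I n for I(X_1^n; Z*(X_1^n)). Admissibility condition (3), the data processing
  inequality and the conditional independence of the two channel uses Z*(X_1^m) and
  Z*(X_{m+1}^n) give I n <= I m + I(X_{m+1}^n; Z*(X_{m+1}^n)). The last term is at most
  (n - m) log |A|, and it equals I (n - m) when m is a multiple of the blocklength b,
  because block independence makes X_{m+1}^n distributed like X_1^{n-m}. So I is
  subadditive along multiples of b and grows by at most log |A| per symbol, and a
  Fekete-type argument shows that I n / n converges to inf_k I (k b) / (k b).
  Condition (2) carries the rate over to Z.
*)

section \<open>Pointwise mutual information and Gibbs' inequality\<close>

definition pmi :: "('x \<times> 'y) pmf \<Rightarrow> 'x \<times> 'y \<Rightarrow> real" where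
  "pmi q xy = log 2 (pmf q xy / (pmf (map_pmf fst q) (fst xy) * pmf (map_pmf snd q) (snd xy)))"

lemma minfo_eq_integral_pmi: "minfo q = (\<integral>xy. pmi q xy \<partial>q)"
  by (simp add: minfo_def pmi_def)

lemma pmf_pos_marginals:
  assumes "xy \<in> set_pmf q"
  shows "0 < pmf q xy" "0 < pmf (map_pmf fst q) (fst xy)" "0 < pmf (map_pmf snd q) (snd xy)"
  using assms by (auto intro!: pmf_positive)

lemma pmf_le_pmf_map_snd: "pmf q (x, y) \<le> pmf (map_pmf snd q) y"
proof -
  have "pmf q (x, y) = measure q {(x, y)}" by (simp add: measure_pmf_single)
  also have "\<dots> \<le> measure q (snd -` {y})" by (rule measure_pmf.finite_measure_mono) auto
  finally show ?thesis by (simp add: pmf_map)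
qed

lemma nn_integral_pmf_fiber_snd:
  "(\<integral>\<^sup>+a. ennreal (pmf q (a, c)) \<partial>count_space UNIV) = ennreal (pmf (map_pmf snd q) c)"
proof -
  have "(\<integral>\<^sup>+a. ennreal (pmf q (a, c)) \<partial>count_space UNIV) = emeasure q ((\<lambda>a. (a, c)) ` UNIV)"
    by (rule nn_integral_pmf') (simp add: inj_on_def)
  also have "(\<lambda>a. (a, c)) ` UNIV = snd -` {c}" by force
  finally show ?thesis by (simp add: pmf_map measure_pmf.emeasure_eq_measure)
qed

lemma nn_integral_pmf_product:
  "(\<integral>\<^sup>+xy. ennreal (pmf p (fst xy) * pmf p' (snd xy)) \<partial>count_space UNIV) = 1"
proof -
  have "pmf (pair_pmf p p') xy = pmf p (fst xy) * pmf p' (snd xy)" for xy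
    by (cases xy) (simp add: pmf_pair)
  then show ?thesis using nn_integral_pmf[where p="pair_pmf p p'" and A=UNIV] by simp
qed

lemma log_le_linear: "0 < t \<Longrightarrow> log 2 t \<le> (t - 1) / ln 2"
  using ln_le_minus_one[of t] by (simp add: log_def divide_right_mono)

lemma integrable_ratio_pmf:
  fixes s :: "'x \<Rightarrow> real" and r :: "'x pmf"
  assumes s_nonneg: "\<And>x. 0 \<le> s x" and s_mass: "(\<integral>\<^sup>+x. ennreal (s x) \<partial>count_space UNIV) \<le> 1"
  shows "integrable r (\<lambda>x. s x / pmf r x)" and "(\<integral>x. s x / pmf r x \<partial>r) \<le> 1"
proof -
  have "(\<integral>\<^sup>+x. ennreal (s x / pmf r x) \<partial>r)
      = (\<integral>\<^sup>+x. ennreal (pmf r x) * ennreal (s x / pmf r x) \<partial>count_space UNIV)"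
    by (rule nn_integral_measure_pmf)
  also have "\<dots> \<le> (\<integral>\<^sup>+x. ennreal (s x) \<partial>count_space UNIV)"
    by (intro nn_integral_mono) (auto simp: ennreal_mult[symmetric] s_nonneg)
  finally have mass: "(\<integral>\<^sup>+x. ennreal (s x / pmf r x) \<partial>r) \<le> 1"
    using s_mass by simp
  then show "integrable r (\<lambda>x. s x / pmf r x)"
    by (intro integrableI_nonneg) (auto simp: s_nonneg top.not_eq_extremum intro: le_less_trans)
  have "(\<integral>x. s x / pmf r x \<partial>r) = enn2real (\<integral>\<^sup>+x. ennreal (s x / pmf r x) \<partial>r)"
    by (rule integral_eq_nn_integral) (auto simp: s_nonneg)
  also have "\<dots> \<le> 1" using mass enn2real_mono[of _ 1] by simp
  finally show "(\<integral>x. s x / pmf r x \<partial>r) \<le> 1" .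
qed

lemma gibbs_inequality:
  fixes s :: "'x \<Rightarrow> real" and r :: "'x pmf"
  assumes s_nonneg: "\<And>x. 0 \<le> s x" and s_mass: "(\<integral>\<^sup>+x. ennreal (s x) \<partial>count_space UNIV) \<le> 1"
    and s_pos: "\<And>x. x \<in> set_pmf r \<Longrightarrow> 0 < s x"
  shows "(\<integral>x. log 2 (s x / pmf r x) \<partial>r) \<le> 0"
proof (cases "integrable r (\<lambda>x. log 2 (s x / pmf r x))")
  case False
  then show ?thesis by (simp add: not_integrable_integral_eq)
next
  case True
  note ratio = integrable_ratio_pmf[OF s_nonneg s_mass, of r]
  have "(\<integral>x. log 2 (s x / pmf r x) \<partial>r) \<le> (\<integral>x. (s x / pmf r x - 1) / ln 2 \<partial>r)"
  proof (rule integral_mono_AE[OF True])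
    show "integrable r (\<lambda>x. (s x / pmf r x - 1) / ln 2)" using ratio(1) by auto
    show "AE x in r. log 2 (s x / pmf r x) \<le> (s x / pmf r x - 1) / ln 2"
      using AE_measure_pmf[of r]
      by eventually_elim (auto intro!: log_le_linear divide_pos_pos s_pos pmf_positive)
  qed
  also have "\<dots> = ((\<integral>x. s x / pmf r x \<partial>r) - 1) / ln 2"
    using ratio(1) by simp
  also have "\<dots> \<le> 0" using ratio(2) by (simp add: divide_nonpos_pos)
  finally show ?thesis .
qed

lemma minfo_nonneg: "0 \<le> minfo q"
proof -
  let ?s = "\<lambda>xy. pmf (map_pmf fst q) (fst xy) * pmf (map_pmf snd q) (snd xy)"
  have "AE xy in q. log 2 (?s xy / pmf q xy) = - pmi q xy"
    using AE_measure_pmf[of q]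
    by eventually_elim (simp add: pmi_def log_divide pmf_pos_marginals)
  then have "(\<integral>xy. log 2 (?s xy / pmf q xy) \<partial>q) = - minfo q"
    unfolding minfo_eq_integral_pmi by (subst integral_cong_AE) auto
  moreover have "(\<integral>xy. log 2 (?s xy / pmf q xy) \<partial>q) \<le> 0"
    by (rule gibbs_inequality) (auto simp: nn_integral_pmf_product pmf_pos_marginals)
  ultimately show ?thesis by simp
qed

lemma pmi_le_neg_log_fst:
  assumes "xy \<in> set_pmf q"
  shows "pmi q xy \<le> - log 2 (pmf (map_pmf fst q) (fst xy))"
proof -
  obtain x y where xy: "xy = (x, y)" by (cases xy)
  note pos = pmf_pos_marginals[OF assms, unfolded xy fst_conv snd_conv]
  have "pmf q (x, y) / (pmf (map_pmf fst q) x * pmf (map_pmf snd q) y) \<le> 1 / pmf (map_pmf fst q) x"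
    using pos pmf_le_pmf_map_snd[of q x y] by (simp add: field_simps)
  then have "pmi q xy \<le> log 2 (1 / pmf (map_pmf fst q) x)"
    using pos by (simp add: pmi_def xy)
  then show ?thesis using pos by (simp add: xy log_divide)
qed

lemma neg_pmi_le_ratio:
  assumes "xy \<in> set_pmf q"
  shows "- pmi q xy \<le> pmf (map_pmf fst q) (fst xy) * pmf (map_pmf snd q) (snd xy) / pmf q xy / ln 2"
proof -
  note pos = pmf_pos_marginals[OF assms]
  have "- pmi q xy = log 2 (pmf (map_pmf fst q) (fst xy) * pmf (map_pmf snd q) (snd xy) / pmf q xy)"
    using pos by (simp add: pmi_def log_divide)
  also have "\<dots>
      \<le> (pmf (map_pmf fst q) (fst xy) * pmf (map_pmf snd q) (snd xy) / pmf q xy - 1) / ln 2"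
    using pos by (intro log_le_linear) simp
  also have "\<dots> \<le> pmf (map_pmf fst q) (fst xy) * pmf (map_pmf snd q) (snd xy) / pmf q xy / ln 2"
    by (intro divide_right_mono) auto
  finally show ?thesis .
qed

lemma integrable_neg_log_pmf_fst:
  assumes "finite (set_pmf (map_pmf fst q))"
  shows "integrable q (\<lambda>xy. - log 2 (pmf (map_pmf fst q) (fst xy)))"
  using integrable_measure_pmf_finite[OF assms, of "\<lambda>x. - log 2 (pmf (map_pmf fst q) x)"] by simp

lemma integrable_pmi:
  assumes fin: "finite (set_pmf (map_pmf fst q))"
  shows "integrable q (pmi q)"
proof (rule Bochner_Integration.integrable_bound)
  let ?s = "\<lambda>xy. pmf (map_pmf fst q) (fst xy) * pmf (map_pmf snd q) (snd xy)"
  show "integrable q (\<lambda>xy. - log 2 (pmf (map_pmf fst q) (fst xy)) + ?s xy / pmf q xy / ln 2)"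
    using integrable_neg_log_pmf_fst[OF fin] integrable_ratio_pmf(1)[of ?s q]
    by (intro Bochner_Integration.integrable_add integrable_divide)
      (auto simp: nn_integral_pmf_product)
  show "AE xy in q. norm (pmi q xy) \<le>
      norm (- log 2 (pmf (map_pmf fst q) (fst xy)) + ?s xy / pmf q xy / ln 2)"
    using AE_measure_pmf[of q]
  proof eventually_elim
    case (elim xy)
    have "0 \<le> - log 2 (pmf (map_pmf fst q) (fst xy))"
      using pmf_pos_marginals(2)[OF elim] pmf_le_1 by simp
    moreover have "0 \<le> ?s xy / pmf q xy / ln 2" by simp
    ultimately show ?case
      using pmi_le_neg_log_fst[OF elim] neg_pmi_le_ratio[OF elim]
      by (simp only: real_norm_def abs_le_iff) linarith
  qed
qed simp

lemma entropy_le_log_card: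
  assumes fin: "finite (set_pmf p)"
  shows "(\<integral>x. - log 2 (pmf p x) \<partial>p) \<le> log 2 (card (set_pmf p))"
proof -
  let ?u = "pmf_of_set (set_pmf p)"
  have ne: "set_pmf p \<noteq> {}" by (rule set_pmf_not_empty)
  have "AE x in p. log 2 (pmf ?u x / pmf p x) = - log 2 (card (set_pmf p)) - log 2 (pmf p x)"
    using AE_measure_pmf[of p]
  proof eventually_elim
    case (elim x)
    have "0 < pmf p x" "0 < card (set_pmf p)"
      using elim fin ne by (auto simp: card_gt_0_iff pmf_positive)
    then show ?case using elim fin ne by (simp add: log_divide log_mult)
  qed
  then have "(\<integral>x. log 2 (pmf ?u x / pmf p x) \<partial>p)
      = (\<integral>x. - log 2 (card (set_pmf p)) - log 2 (pmf p x) \<partial>p)"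
    by (intro integral_cong_AE) auto
  also have "\<dots> = (\<integral>x. - log 2 (pmf p x) \<partial>p) - log 2 (card (set_pmf p))"
    using fin by (simp add: integrable_measure_pmf_finite)
  finally have "(\<integral>x. - log 2 (pmf p x) \<partial>p) - log 2 (card (set_pmf p))
      = (\<integral>x. log 2 (pmf ?u x / pmf p x) \<partial>p)" ..
  also have "\<dots> \<le> 0"
  proof (rule gibbs_inequality)
    show "(\<integral>\<^sup>+x. ennreal (pmf ?u x) \<partial>count_space UNIV) \<le> 1"
      unfolding nn_integral_pmf by (rule measure_pmf.emeasure_le_1)
  qed (use fin ne in auto)
  finally show ?thesis by simp
qed

lemma minfo_le_log_card_fst:
  assumes fin: "finite (set_pmf (map_pmf fst q))"
  shows "minfo q \<le> log 2 (card (set_pmf (map_pmf fst q)))"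
proof -
  have "AE xy in q. pmi q xy \<le> - log 2 (pmf (map_pmf fst q) (fst xy))"
    using AE_measure_pmf[of q] by eventually_elim (rule pmi_le_neg_log_fst)
  then have "minfo q \<le> (\<integral>xy. - log 2 (pmf (map_pmf fst q) (fst xy)) \<partial>q)"
    unfolding minfo_eq_integral_pmi
    using integrable_pmi[OF fin] integrable_neg_log_pmf_fst[OF fin] by (intro integral_mono_AE)
  also have "\<dots> = (\<integral>x. - log 2 (pmf (map_pmf fst q) x) \<partial>map_pmf fst q)" by simp
  also have "\<dots> \<le> log 2 (card (set_pmf (map_pmf fst q)))" by (rule entropy_le_log_card[OF fin])
  finally show ?thesis .
qed

section \<open>Data processing\<close>

text \<open>The (sub-)probability density of (A', B, C) where A' is drawn from the conditional
  law of A given C, independently of B.\<close>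

definition cond_product :: "('x \<times> 'y \<times> 'z) pmf \<Rightarrow> 'x \<times> 'y \<times> 'z \<Rightarrow> real" where
  "cond_product q = (\<lambda>(a, b, c).
     pmf (map_pmf (\<lambda>(a, b, c). (a, c)) q) (a, c) * pmf (map_pmf snd q) (b, c)
       / pmf (map_pmf (\<lambda>(a, b, c). c) q) c)"

lemma map_pmf_triple_marginals:
  "map_pmf fst (map_pmf (\<lambda>(a, b, c). (a, c)) q) = map_pmf fst q"
  "map_pmf snd (map_pmf (\<lambda>(a, b, c). (a, c)) q) = map_pmf (\<lambda>(a, b, c). c) q"
  "map_pmf fst (map_pmf (\<lambda>(a, b, c). (a, b)) q) = map_pmf fst q"
  "map_pmf snd (map_pmf (\<lambda>(a, b, c). (a, b)) q) = map_pmf (\<lambda>(a, b, c). b) q"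
  "map_pmf snd (map_pmf snd q) = map_pmf (\<lambda>(a, b, c). c) q"
  by (simp_all add: map_pmf_comp split_beta cong: map_pmf_cong)

lemma nn_integral_cond_product_le_1:
  "(\<integral>\<^sup>+x. ennreal (cond_product q x) \<partial>count_space UNIV) \<le> 1"
proof -
  let ?ac = "map_pmf (\<lambda>(a, b, c). (a, c)) q" and ?c = "map_pmf (\<lambda>(a, b, c). c) q"
  have "(\<integral>\<^sup>+x. ennreal (cond_product q x) \<partial>count_space UNIV)
      = (\<integral>\<^sup>+bc. \<integral>\<^sup>+a. ennreal (cond_product q (a, bc)) \<partial>count_space UNIV \<partial>count_space UNIV)"
    by (rule nn_integral_snd_count_space[symmetric])
  also have "\<dots> \<le> (\<integral>\<^sup>+bc. ennreal (pmf (map_pmf snd q) bc) \<partial>count_space UNIV)"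
  proof (intro nn_integral_mono)
    fix bc :: "'b \<times> 'c"
    obtain b c where bc: "bc = (b, c)" by (cases bc)
    have "(\<integral>\<^sup>+a. ennreal (cond_product q (a, bc)) \<partial>count_space UNIV)
        = (\<integral>\<^sup>+a. ennreal (pmf (map_pmf snd q) (b, c) / pmf ?c c) * ennreal (pmf ?ac (a, c))
            \<partial>count_space UNIV)"
      by (intro nn_integral_cong)
        (simp add: cond_product_def bc ennreal_mult[symmetric] mult.commute)
    also have "\<dots> = ennreal (pmf (map_pmf snd q) (b, c) / pmf ?c c)
        * (\<integral>\<^sup>+a. ennreal (pmf ?ac (a, c)) \<partial>count_space UNIV)"
      by (rule nn_integral_cmult) simp
    also have "\<dots> = ennreal (pmf (map_pmf snd q) (b, c) / pmf ?c c) * ennreal (pmf ?c c)"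
      by (simp add: nn_integral_pmf_fiber_snd map_pmf_triple_marginals)
    also have "\<dots> \<le> ennreal (pmf (map_pmf snd q) bc)"
      by (cases "pmf ?c c = 0") (simp_all add: bc ennreal_mult[symmetric])
    finally show "(\<integral>\<^sup>+a. ennreal (cond_product q (a, bc)) \<partial>count_space UNIV)
        \<le> ennreal (pmf (map_pmf snd q) bc)" .
  qed
  also have "\<dots> = 1" by (simp add: nn_integral_pmf)
  finally show ?thesis .
qed

lemma cond_product_nonneg: "0 \<le> cond_product q x"
  by (simp add: cond_product_def split_beta)

lemma cond_product_pos: "x \<in> set_pmf q \<Longrightarrow> 0 < cond_product q x"
  by (cases x) (force simp: cond_product_def intro!: pmf_positive divide_pos_pos mult_pos_pos)

lemma log_cond_product_ratio:
  assumes mk: "markov q" and x: "x \<in> set_pmf q"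
  shows "log 2 (cond_product q x / pmf q x) =
    pmi (map_pmf (\<lambda>(a, b, c). (a, c)) q) ((\<lambda>(a, b, c). (a, c)) x)
    - pmi (map_pmf (\<lambda>(a, b, c). (a, b)) q) ((\<lambda>(a, b, c). (a, b)) x)"
proof -
  obtain a b c where abc: "x = (a, b, c)" by (cases x)
  let ?ab = "map_pmf (\<lambda>(a, b, c). (a, b)) q" and ?ac = "map_pmf (\<lambda>(a, b, c). (a, c)) q"
  let ?a = "map_pmf fst q" and ?b = "map_pmf (\<lambda>(a, b, c). b) q" and ?c = "map_pmf (\<lambda>(a, b, c). c) q"
  have pos: "0 < pmf ?ab (a, b)" "0 < pmf ?ac (a, c)" "0 < pmf (map_pmf snd q) (b, c)"
    "0 < pmf ?a a" "0 < pmf ?b b" "0 < pmf ?c c" "0 < pmf q (a, b, c)"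
    using x abc by (force intro!: pmf_positive)+
  have "pmf q (a, b, c) * pmf ?b b = pmf ?ab (a, b) * pmf (map_pmf snd q) (b, c)"
    using mk by (simp add: markov_def)
  then have "cond_product q x / pmf q x
      = (pmf ?ac (a, c) / (pmf ?a a * pmf ?c c)) / (pmf ?ab (a, b) / (pmf ?a a * pmf ?b b))"
    using pos by (simp add: cond_product_def abc field_simps)
  then show ?thesis
    using pos by (simp add: abc pmi_def map_pmf_triple_marginals log_divide log_mult)
qed

lemma minfo_data_processing:
  fixes q :: "('x \<times> 'y \<times> 'z) pmf"
  assumes mk: "markov q" and fin: "finite (set_pmf (map_pmf fst q))"
  shows "minfo (map_pmf (\<lambda>(a, b, c). (a, c)) q) \<le> minfo (map_pmf (\<lambda>(a, b, c). (a, b)) q)"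
proof -
  let ?ab = "map_pmf (\<lambda>(a, b, c). (a, b)) q" and ?ac = "map_pmf (\<lambda>(a, b, c). (a, c)) q"
  let ?pmi_ab = "\<lambda>x. pmi ?ab ((\<lambda>(a, b, c). (a, b)) x)"
    and ?pmi_ac = "\<lambda>x. pmi ?ac ((\<lambda>(a, b, c). (a, c)) x)"
  have int: "integrable q ?pmi_ab" "integrable q ?pmi_ac"
    using integrable_pmi[of ?ab] integrable_pmi[of ?ac] fin
    by (simp_all add: map_pmf_triple_marginals)
  have "AE x in q. log 2 (cond_product q x / pmf q x) = ?pmi_ac x - ?pmi_ab x"
    using AE_measure_pmf[of q] by eventually_elim (rule log_cond_product_ratio[OF mk])
  then have "(\<integral>x. log 2 (cond_product q x / pmf q x) \<partial>q) = (\<integral>x. ?pmi_ac x - ?pmi_ab x \<partial>q)"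
    by (intro integral_cong_AE) auto
  also have "\<dots> = minfo ?ac - minfo ?ab"
    using int by (simp add: minfo_eq_integral_pmi)
  moreover have "(\<integral>x. log 2 (cond_product q x / pmf q x) \<partial>q) \<le> 0"
    by (intro gibbs_inequality cond_product_nonneg nn_integral_cond_product_le_1 cond_product_pos)
  ultimately show ?thesis by simp
qed

section \<open>Independent channel uses\<close>

lemma pmf_chan_joint: "pmf (chan_joint K p) (x, z) = pmf p x * pmf (K x) z"
proof -
  have "pmf (map_pmf (Pair y) (K y)) (x, z) = (if y = x then pmf (K x) z else 0)" for y
    using pmf_map_inj'[of "Pair x" "K x" z] by (auto simp: inj_on_def pmf_eq_0_set_pmf)
  then show ?thesis
    by (simp add: chan_joint_def pmf_bind)
      (subst integral_measure_pmf_real[where A="{x}"], auto split: if_splits)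
qed

lemma chan_joint_fst: "map_pmf fst (chan_joint K p) = p"
  by (simp add: chan_joint_def map_bind_pmf map_pmf_comp bind_return_pmf')

lemma chan_joint_snd: "map_pmf snd (chan_joint K p) = bind_pmf p K"
  by (simp add: chan_joint_def map_bind_pmf map_pmf_comp)

lemma chan_joint2_eq_chan_joint:
  "chan_joint2 K f g p = chan_joint (\<lambda>x. pair_pmf (K (f x)) (K (g x))) p"
  by (simp add: chan_joint2_def chan_joint_def pair_pmf_def map_pmf_def bind_assoc_pmf
      bind_return_pmf)

lemma pmi_chan_joint:
  assumes "(x, z) \<in> set_pmf (chan_joint K p)"
  shows "pmi (chan_joint K p) (x, z) = log 2 (pmf (K x) z / pmf (bind_pmf p K) z)"
proof -
  have "0 < pmf (chan_joint K p) (x, z)" using assms by (rule pmf_positive)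
  then have "0 < pmf p x" by (simp add: pmf_chan_joint zero_less_mult_iff)
  then show ?thesis by (simp add: pmi_def pmf_chan_joint chan_joint_fst chan_joint_snd)
qed

lemma chan_joint2_fst_output:
  "map_pmf (\<lambda>(x, z1, z2). (f x, z1)) (chan_joint2 K f g p) = chan_joint K (map_pmf f p)"
  by (simp add: chan_joint2_def chan_joint_def map_bind_pmf bind_map_pmf map_pmf_comp
      bind_return_pmf' map_pmf_def[symmetric])

lemma chan_joint2_snd_output:
  "map_pmf (\<lambda>(x, z1, z2). (g x, z2)) (chan_joint2 K f g p) = chan_joint K (map_pmf g p)"
  by (simp add: chan_joint2_def chan_joint_def map_bind_pmf bind_map_pmf map_pmf_comp
      bind_return_pmf' map_pmf_def[symmetric])

lemma pmi_chan_joint2: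
  assumes e: "(x, z1, z2) \<in> set_pmf (chan_joint2 K f g p)"
  shows "pmi (map_pmf snd (chan_joint2 K f g p)) (z1, z2) =
    pmi (chan_joint K (map_pmf f p)) (f x, z1) + pmi (chan_joint K (map_pmf g p)) (g x, z2)
    - pmi (chan_joint2 K f g p) (x, z1, z2)"
proof -
  let ?Q = "chan_joint2 K f g p"
  let ?Z1 = "bind_pmf (map_pmf f p) K" and ?Z2 = "bind_pmf (map_pmf g p) K"
  have in_A: "(f x, z1) \<in> set_pmf (chan_joint K (map_pmf f p))"
    using imageI[OF e, of "\<lambda>(x, z1, z2). (f x, z1)"]
    by (subst chan_joint2_fst_output[of f K g p, symmetric]) simp
  have in_B: "(g x, z2) \<in> set_pmf (chan_joint K (map_pmf g p))"
    using imageI[OF e, of "\<lambda>(x, z1, z2). (g x, z2)"]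
    by (subst chan_joint2_snd_output[of g K f p, symmetric]) simp
  have W_fst: "map_pmf fst (map_pmf snd ?Q) = ?Z1" and W_snd: "map_pmf snd (map_pmf snd ?Q) = ?Z2"
    using arg_cong[OF chan_joint2_fst_output, of "map_pmf snd"]
      arg_cong[OF chan_joint2_snd_output, of "map_pmf snd"]
    by (simp_all add: map_pmf_comp split_beta chan_joint_snd)
  have pos: "0 < pmf (K (f x)) z1" "0 < pmf (K (g x)) z2" "0 < pmf (map_pmf snd ?Q) (z1, z2)"
    "0 < pmf ?Z1 z1" "0 < pmf ?Z2 z2"
    using e pmf_pos_marginals[OF e] pmf_pos_marginals[OF in_A] pmf_pos_marginals[OF in_B]
    by (auto simp: W_fst W_snd chan_joint_snd chan_joint2_def intro!: pmf_positive)
  have "pmi ?Q (x, z1, z2)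
      = log 2 (pmf (K (f x)) z1 * pmf (K (g x)) z2 / pmf (map_pmf snd ?Q) (z1, z2))"
    using pmi_chan_joint[OF e[unfolded chan_joint2_eq_chan_joint]]
    by (simp add: chan_joint2_eq_chan_joint chan_joint_snd pmf_pair)
  moreover have "pmi (map_pmf snd ?Q) (z1, z2)
      = log 2 (pmf (map_pmf snd ?Q) (z1, z2) / (pmf ?Z1 z1 * pmf ?Z2 z2))"
    by (simp add: pmi_def W_fst W_snd)
  ultimately show ?thesis
    using pmi_chan_joint[OF in_A] pmi_chan_joint[OF in_B] pos by (simp add: log_divide log_mult)
qed

lemma minfo_chan_joint2_le:
  assumes fin: "finite (set_pmf p)"
  shows "minfo (chan_joint2 K f g p)
    \<le> minfo (chan_joint K (map_pmf f p)) + minfo (chan_joint K (map_pmf g p))"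
proof -
  let ?Q = "chan_joint2 K f g p"
  let ?A = "chan_joint K (map_pmf f p)" and ?B = "chan_joint K (map_pmf g p)"
  let ?hA = "\<lambda>(x, z1, z2). (f x, z1)" and ?hB = "\<lambda>(x, z1, z2). (g x, z2)"
  have "integrable (map_pmf ?hA ?Q) (pmi ?A)" "integrable (map_pmf ?hB ?Q) (pmi ?B)"
    and int_Q: "integrable ?Q (pmi ?Q)"
    unfolding chan_joint2_fst_output chan_joint2_snd_output using fin
    by (auto simp: chan_joint_fst chan_joint2_eq_chan_joint intro!: integrable_pmi)
  then have int_A: "integrable ?Q (\<lambda>e. pmi ?A (?hA e))"
    and int_B: "integrable ?Q (\<lambda>e. pmi ?B (?hB e))"
    by simp_all
  have "AE e in ?Q. pmi (map_pmf snd ?Q) (snd e) = pmi ?A (?hA e) + pmi ?B (?hB e) - pmi ?Q e"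
    using AE_measure_pmf[of ?Q] by eventually_elim (auto simp: pmi_chan_joint2)
  then have "minfo (map_pmf snd ?Q) = minfo ?A + minfo ?B - minfo ?Q"
    using int_A int_B int_Q
    by (simp add: minfo_eq_integral_pmi integral_cong_AE
        flip: chan_joint2_fst_output[of f K g p] chan_joint2_snd_output[of g K f p])
  then show ?thesis using minfo_nonneg[of "map_pmf snd ?Q"] by simp
qed

lemma process_length: "is_process P \<Longrightarrow> x \<in> set_pmf (P n) \<Longrightarrow> length x = n"
  by (simp add: is_process_def)

lemma process_take: "is_process P \<Longrightarrow> m \<le> n \<Longrightarrow> map_pmf (take m) (P n) = P m"
  by (simp add: is_process_def)

lemma process_0: "is_process P \<Longrightarrow> P 0 = return_pmf []"
  by (subst set_pmf_subset_singleton[symmetric]) (auto dest: process_length)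

lemma finite_set_pmf_process:
  "is_process (P :: nat \<Rightarrow> ('a::finite) list pmf) \<Longrightarrow> finite (set_pmf (P n))"
  using finite_subset[OF _ finite_lists_length_eq[of "UNIV :: 'a set" n]]
  by (auto dest: process_length)

lemma minfo_chan_joint_le_length:
  fixes p :: "('a::finite) list pmf"
  assumes len: "\<And>x. x \<in> set_pmf p \<Longrightarrow> length x = k"
  shows "minfo (chan_joint K p) \<le> real k * log 2 (real CARD('a))"
proof -
  have sub: "set_pmf p \<subseteq> {xs. set xs \<subseteq> UNIV \<and> length xs = k}" using len by auto
  have fin: "finite (set_pmf p)"
    using finite_subset[OF sub finite_lists_length_eq] by simp
  have "minfo (chan_joint K p) \<le> log 2 (card (set_pmf p))"
    using minfo_le_log_card_fst[of "chan_joint K p"] fin by (simp add: chan_joint_fst)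
  also have "\<dots> \<le> log 2 (CARD('a) ^ k)"
    using card_mono[OF finite_lists_length_eq sub] card_lists_length_eq[of "UNIV :: 'a set" k] fin
    by (simp add: card_gt_0_iff set_pmf_not_empty)
  also have "\<dots> = real k * log 2 (real CARD('a))" by (simp add: log_nat_power)
  finally show ?thesis .
qed

lemma info_n_le:
  "is_process (P :: nat \<Rightarrow> ('a::finite) list pmf) \<Longrightarrow> info_n P K n \<le> real n * log 2 (real CARD('a))"
  unfolding info_n_def by (rule minfo_chan_joint_le_length) (simp add: process_length)

lemma admissible_info_rate_eq: "admissible Z Zs \<Longrightarrow> is_process P \<Longrightarrow> info_rate P Z = info_rate P Zs"
  by (simp add: admissible_def)

lemma admissible_split_coupling:
  fixes Zs :: "'a::finite list \<Rightarrow> 'c pmf"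
  assumes "admissible Z Zs" "is_process P" "1 \<le> m" "m \<le> n"
  obtains q :: "('a list \<times> ('c \<times> 'c) \<times> 'c) pmf" where
    "map_pmf (\<lambda>(x, zz, z). (x, zz)) q = chan_joint2 Zs (take m) (drop m) (P n)"
    "map_pmf (\<lambda>(x, zz, z). (x, z)) q = chan_joint Zs (P n)" "markov q"
  using assms(1)[unfolded admissible_def, THEN conjunct2, THEN conjunct2, THEN conjunct1] assms(2-4)
  by blast

lemma admissible_info_n_split:
  fixes P :: "nat \<Rightarrow> ('a::finite) list pmf" and Zs :: "'a list \<Rightarrow> 'c pmf"
  assumes adm: "admissible Z Zs" and P: "is_process P" and m: "1 \<le> m" "m \<le> N"
  shows "info_n P Zs N \<le> info_n P Zs m + minfo (chan_joint Zs (map_pmf (drop m) (P N)))"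
proof -
  obtain q where
    q_split: "map_pmf (\<lambda>(x, zz, z). (x, zz)) q = chan_joint2 Zs (take m) (drop m) (P N)" and
    q_joint: "map_pmf (\<lambda>(x, zz, z). (x, z)) q = chan_joint Zs (P N)" and
    mk: "markov q"
    using admissible_split_coupling[OF adm P m] .
  have "map_pmf fst q = map_pmf fst (map_pmf (\<lambda>(x, zz, z). (x, z)) q)"
    by (simp add: map_pmf_comp split_beta)
  then have fin: "finite (set_pmf (map_pmf fst q))"
    using finite_set_pmf_process[OF P] by (simp add: q_joint chan_joint_fst)
  have "info_n P Zs N \<le> minfo (chan_joint2 Zs (take m) (drop m) (P N))"
    using minfo_data_processing[OF mk fin] by (simp add: info_n_def q_joint q_split)
  also have "\<dots> \<le> info_n P Zs m + minfo (chan_joint Zs (map_pmf (drop m) (P N)))"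
    using minfo_chan_joint2_le[OF finite_set_pmf_process[OF P, of N], of Zs "take m" "drop m"]
    by (simp add: info_n_def process_take[OF P m(2)])
  finally show ?thesis .
qed

section \<open>Block independence\<close>

lemma blk_append_left: "length u = k * b \<Longrightarrow> i < k \<Longrightarrow> blk b i (u @ v) = blk b i u"
proof -
  assume "length u = k * b" "i < k"
  then have "i * b + b \<le> length u"
    by (metis add.commute mult.commute mult_le_mono2 Suc_leI mult_Suc_right)
  then show ?thesis unfolding blk_def by simp
qed

lemma blk_append_right: "length u = k * b \<Longrightarrow> blk b (k + i) (u @ v) = blk b i v"
  unfolding blk_def by (simp add: algebra_simps)

lemma block_independent_pmf:
  assumes P: "is_process P" and bi: "block_independent P b" and len: "length x = t * b"
  shows "pmf (P (t * b)) x = (\<Prod>i<t. pmf (P b) (blk b i x))"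
proof (cases "t = 0")
  case True
  then show ?thesis using len by (simp add: process_0[OF P])
next
  case False
  then show ?thesis using bi len by (simp add: block_independent_def)
qed

lemma pmf_process_wrong_length: "is_process P \<Longrightarrow> length x \<noteq> n \<Longrightarrow> pmf (P n) x = 0"
  by (auto simp: pmf_eq_0_set_pmf dest: process_length)

lemma block_independent_pmf_append:
  assumes P: "is_process P" and bi: "block_independent P b" and lu: "length u = k * b"
  shows "pmf (P ((k + l) * b)) (u @ v) = pmf (P (k * b)) u * pmf (P (l * b)) v"
proof (cases "length v = l * b")
  case lv: True
  have "pmf (P ((k + l) * b)) (u @ v) = (\<Prod>i<k + l. pmf (P b) (blk b i (u @ v)))"
    by (rule block_independent_pmf[OF P bi]) (simp add: lu lv algebra_simps)
  also have "\<dots> = (\<Prod>i<k. pmf (P b) (blk b i (u @ v))) * (\<Prod>i<l. pmf (P b) (blk b (k + i) (u @ v)))"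
    by (induction l) (simp_all add: mult.assoc)
  also have "\<dots> = (\<Prod>i<k. pmf (P b) (blk b i u)) * (\<Prod>i<l. pmf (P b) (blk b i v))"
    by (simp add: blk_append_left[OF lu] blk_append_right[OF lu])
  finally show ?thesis
    using block_independent_pmf[OF P bi lu] block_independent_pmf[OF P bi lv] by simp
next
  case False
  then show ?thesis
    using lu by (simp add: pmf_process_wrong_length[OF P] algebra_simps)
qed

lemma block_independent_drop_blocks:
  fixes P :: "nat \<Rightarrow> ('a::finite) list pmf"
  assumes P: "is_process P" and bi: "block_independent P b"
  shows "map_pmf (drop (k * b)) (P ((k + l) * b)) = P (l * b)"
proof (rule pmf_eqI)
  fix v :: "'a list"
  define U where "U = {u :: 'a list. length u = k * b}"
  have fin_U: "finite U"
    using finite_lists_length_eq[of "UNIV :: 'a set" "k * b"] by (simp add: U_def)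
  have "drop (k * b) -` {v} \<inter> set_pmf (P ((k + l) * b))
      = (\<lambda>u. u @ v) ` U \<inter> set_pmf (P ((k + l) * b))"
  proof (intro equalityI subsetI)
    fix w assume w: "w \<in> drop (k * b) -` {v} \<inter> set_pmf (P ((k + l) * b))"
    then have "length (take (k * b) w) = k * b" by (auto dest: process_length[OF P])
    then show "w \<in> (\<lambda>u. u @ v) ` U \<inter> set_pmf (P ((k + l) * b))"
      using w by (auto simp: U_def intro!: image_eqI[of w _ "take (k * b) w"])
  qed (auto simp: U_def)
  then have "pmf (map_pmf (drop (k * b)) (P ((k + l) * b))) v
      = measure (P ((k + l) * b)) ((\<lambda>u. u @ v) ` U)"
    by (metis pmf_map measure_Int_set_pmf)
  also have "\<dots> = (\<Sum>u\<in>U. pmf (P ((k + l) * b)) (u @ v))"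
    using fin_U by (simp add: measure_measure_pmf_finite sum.reindex inj_on_def)
  also have "\<dots> = (\<Sum>u\<in>U. pmf (P (k * b)) u) * pmf (P (l * b)) v"
    by (simp add: U_def block_independent_pmf_append[OF P bi] sum_distrib_right)
  also have "(\<Sum>u\<in>U. pmf (P (k * b)) u) = 1"
    using fin_U by (intro sum_pmf_eq_1) (auto simp: U_def dest: process_length[OF P])
  finally show "pmf (map_pmf (drop (k * b)) (P ((k + l) * b))) v = pmf (P (l * b)) v" by simp
qed

lemma block_independent_drop:
  fixes P :: "nat \<Rightarrow> ('a::finite) list pmf"
  assumes P: "is_process P" and bi: "block_independent P b" and b: "1 \<le> b" and kb: "k * b \<le> N"
  shows "map_pmf (drop (k * b)) (P N) = P (N - k * b)"
proof -
  have "k \<le> N" using b kb by (metis dual_order.trans mult_1_right mult_le_mono2)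
  then have len: "(k + (N - k)) * b = N * b" by simp
  have "map_pmf (drop (k * b)) (P N) = map_pmf (drop (k * b)) (map_pmf (take N) (P (N * b)))"
    using b by (simp add: process_take[OF P])
  also have "\<dots> = map_pmf (take (N - k * b)) (map_pmf (drop (k * b)) (P ((k + (N - k)) * b)))"
    by (simp add: map_pmf_comp drop_take len)
  also have "\<dots> = map_pmf (take (N - k * b)) (P (N * b - k * b))"
    by (simp add: block_independent_drop_blocks[OF P bi] diff_mult_distrib)
  also have "\<dots> = P (N - k * b)"
    using b by (intro process_take[OF P] diff_le_mono) simp
  finally show ?thesis .
qed

section \<open>A Fekete-type limit\<close>

locale block_subadditive =
  fixes a :: "nat \<Rightarrow> real" and b :: nat and c :: real
  assumes block_pos: "1 \<le> b"
    and nonneg: "0 \<le> a n"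
    and linear_bound: "a n \<le> real n * c"
    and increment_bound: "1 \<le> m \<Longrightarrow> m \<le> N \<Longrightarrow> a N \<le> a m + real (N - m) * c"
    and subadditive: "1 \<le> k \<Longrightarrow> a (k * b + n) \<le> a (k * b) + a n"
begin

definition block_rate :: real where
  "block_rate = (INF k\<in>{1..}. a (k * b) / real (k * b))"

lemma c_nonneg: "0 \<le> c"
  using nonneg[of 1] linear_bound[of 1] by simp

lemma block_rate_le: "1 \<le> k \<Longrightarrow> block_rate \<le> a (k * b) / real (k * b)"
  unfolding block_rate_def by (rule cINF_lower) (auto intro: bdd_belowI2[of _ 0] simp: nonneg)

lemma block_rate_nonneg: "0 \<le> block_rate"
  unfolding block_rate_def by (rule cINF_greatest) (auto simp: nonneg)

lemma multiple_block_le: "1 \<le> k \<Longrightarrow> a (q * (k * b) + r) \<le> real q * a (k * b) + a r"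
proof (induction q)
  case (Suc q)
  have "a (Suc q * (k * b) + r) = a (k * b + (q * (k * b) + r))" by (simp add: algebra_simps)
  also have "\<dots> \<le> a (k * b) + a (q * (k * b) + r)" by (rule subadditive[OF Suc.prems])
  also have "\<dots> \<le> real (Suc q) * a (k * b) + a r" using Suc by (simp add: algebra_simps)
  finally show ?case .
qed simp

lemma quotient_le:
  assumes k: "1 \<le> k" and n: "1 \<le> n"
  shows "a n / real n \<le> a (k * b) / real (k * b) + real (k * b) * c / real n"
proof -
  let ?B = "k * b"
  have B: "1 \<le> ?B" using k block_pos by simp
  have "real (n div ?B) * real ?B \<le> real n"
    by (metis of_nat_le_iff of_nat_mult div_times_less_eq_dividend)
  then have div_le: "real (n div ?B) \<le> real n / real ?B" using B by (simp add: field_simps)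
  have "a n = a ((n div ?B) * ?B + n mod ?B)" by (simp only: div_mult_mod_eq)
  also have "\<dots> \<le> real (n div ?B) * a ?B + a (n mod ?B)" by (rule multiple_block_le[OF k])
  also have "\<dots> \<le> real n / real ?B * a ?B + real ?B * c"
  proof (rule add_mono)
    show "real (n div ?B) * a ?B \<le> real n / real ?B * a ?B"
      using div_le nonneg by (rule mult_right_mono)
    have "n mod ?B \<le> ?B" using B by (intro less_imp_le mod_less_divisor) simp
    then have "real (n mod ?B) \<le> real ?B" by (simp only: of_nat_le_iff)
    then show "a (n mod ?B) \<le> real ?B * c"
      using linear_bound[of "n mod ?B"] c_nonneg by (meson mult_right_mono order_trans)
  qed
  finally show ?thesis using n B by (simp add: field_simps)
qed

lemma quotient_ge:
  assumes n: "1 \<le> n"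
  shows "block_rate - real b * c / real n \<le> a n / real n"
proof -
  define N where "N = (n div b + 1) * b"
  have "n div b * b + n mod b = n" "n mod b < b" "N = n div b * b + b"
    using block_pos by (simp_all add: N_def)
  then have nN: "n \<le> N" and Nn: "N - n \<le> b" by linarith+
  have "block_rate * real n \<le> block_rate * real N"
    using nN block_rate_nonneg by (simp add: mult_left_mono)
  also have "\<dots> \<le> a N"
  proof -
    have "block_rate \<le> a N / real N" unfolding N_def by (rule block_rate_le) simp
    then show ?thesis using n nN by (simp add: pos_le_divide_eq)
  qed
  also have "\<dots> \<le> a n + real b * c"
  proof -
    have "real (N - n) * c \<le> real b * c" using Nn c_nonneg by (intro mult_right_mono) auto
    then show ?thesis using increment_bound[OF n nN] by linarith
  qed
  finally have "(block_rate * real n - real b * c) / real n \<le> a n / real n"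
    by (simp add: divide_right_mono)
  then show ?thesis using n by (simp add: diff_divide_distrib)
qed

lemma quotient_tendsto: "(\<lambda>n. a n / real n) \<longlonglongrightarrow> block_rate"
proof (rule order_tendstoI)
  fix y assume "y < block_rate"
  moreover have "(\<lambda>n. block_rate - real b * c / real n) \<longlonglongrightarrow> block_rate"
    by (auto intro!: tendsto_eq_intros lim_const_over_n)
  ultimately have "eventually (\<lambda>n. y < block_rate - real b * c / real n) sequentially"
    by (simp add: order_tendstoD)
  then show "eventually (\<lambda>n. y < a n / real n) sequentially"
    using eventually_ge_at_top[of 1]
    by eventually_elim (use quotient_ge in fastforce)
next
  fix y assume "block_rate < y"
  then obtain k where k: "1 \<le> k" and ky: "a (k * b) / real (k * b) < y"
    unfolding block_rate_def by (auto simp: cINF_less_iff bdd_belowI2[of _ 0] nonneg)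
  have "(\<lambda>n. a (k * b) / real (k * b) + real (k * b) * c / real n) \<longlonglongrightarrow> a (k * b) / real (k * b)"
    by (auto intro!: tendsto_eq_intros lim_const_over_n)
  with ky have
    "eventually (\<lambda>n. a (k * b) / real (k * b) + real (k * b) * c / real n < y) sequentially"
    by (simp add: order_tendstoD)
  then show "eventually (\<lambda>n. a n / real n < y) sequentially"
    using eventually_ge_at_top[of 1]
    by eventually_elim (use quotient_le[OF k] in fastforce)
qed

end

theorem lemma3p5:
  fixes P :: "nat \<Rightarrow> ('a::finite) list pmf"
    and Z :: "'a list \<Rightarrow> 'b pmf"
    and Zs :: "'a list \<Rightarrow> 'c pmf"
  assumes "block_indep_process P"
    and "admissible Z Zs"
  shows "info_rate P Z = info_rate P Zs \<and>
         (\<exists>L. (\<lambda>n. info_n P Zs n / real n) \<longlonglongrightarrow> L \<and> info_rate P Zs = ereal L)"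
proof -
  obtain b where P: "is_process P" and b: "1 \<le> b" and bi: "block_independent P b"
    using assms(1) unfolding block_indep_process_def by blast
  define c where "c = log 2 (real CARD('a))"
  have drop_le: "minfo (chan_joint Zs (map_pmf (drop m) (P N))) \<le> real (N - m) * c" for m N
    unfolding c_def by (rule minfo_chan_joint_le_length) (auto dest: process_length[OF P])
  interpret block_subadditive "info_n P Zs" b c
  proof
    show "0 \<le> info_n P Zs n" for n by (simp add: info_n_def minfo_nonneg)
    show "info_n P Zs n \<le> real n * c" for n unfolding c_def by (rule info_n_le[OF P])
    show "info_n P Zs N \<le> info_n P Zs m + real (N - m) * c" if "1 \<le> m" "m \<le> N" for m N
      using admissible_info_n_split[OF assms(2) P that] drop_le[of m N] by linarith
    show "info_n P Zs (k * b + n) \<le> info_n P Zs (k * b) + info_n P Zs n" if "1 \<le> k" for k n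
      using admissible_info_n_split[OF assms(2) P, of "k * b" "k * b + n"]
        block_independent_drop[OF P bi b, of k "k * b + n"] that b
      by (simp add: info_n_def)
  qed (rule b)
  have "info_rate P Zs = ereal block_rate"
    unfolding info_rate_def by (intro lim_imp_Liminf) (auto intro: tendsto_ereal quotient_tendsto)
  then show ?thesis
    using admissible_info_rate_eq[OF assms(2) P] quotient_tendsto by blast
qed

end
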